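(* In the setting described in the context, there does not exist a preorder that rationalizes $g$. Moreover, any binary relation $\precsim$ on $\hat{\mathscr{T}}$ that rationalizes $g$ contains a cycle of the form $T_0\prec T_1\sim T_2\prec T_3\sim T_0$ for some $T_0,T_1,T_2,T_3\in\hat{\mathscr{T}}$.
   Context: Agents $i\in[0,1]$ (Lebesgue measure) have an observable characteristic $x_i\in\{E,I,W\}$: $x_i=E$ for $i\in[0,1/3)$, $x_i=I$ for $i\in[1/3,2/3]$, $x_i=W$ for $i\in(2/3,1]$; there are no unobservable characteristics. Incomes lie in $Z=[0,\bar z]$ with $\bar z>1$. Every agent has cost of earning income $v(z)=\frac12 z^2$ and utility $u(c-v(z))$, $u$ strictly increasing, concave, twice continuously differentiable. Tax policies $T:Z\times\{E,I,W\}\to\mathbb{R}$ may depend on income and the characteristic, with continuous first and second $z$-derivatives; $T_i(z)=T(z;x_i)$. The admissible set $\hat{\mathscr{T}}$ is an open set of such policies (in the norm $\max\{|T|+|\partial_zT|+|\partial_z^2T|\}$) containing all policies strictly convex in $z$ and all policies that, for each characteristic, are affine in $z$ with slope in $[0,1]$, such that for all $T\in\hat{\mathscr{T}}$ each agent has a unique optimal income $z_i(T)\in\arg\max_z z-T_i(z)-v(z)$. Revenue is $R(T)=\int_0^1T_i(z_i(T))\,di$. Welfare weights are libertarian and common to all agents: $g_i(c,z)=g(z-c)$ where $g>0$ is differentiable with $g'>0$ (weights increase in tax paid $t=z-c$); $g_i(T)=g(z_i(T)-c_i)$ with $c_i=z_i(T)-T_i(z_i(T))$. Paths: continuous $\rho:[a,b]\to\hat{\mathscr{T}}$,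 $\theta\mapsto T^{\rho,\theta}$, $a<0<1<b$, with $T^\rho_i(z,\theta)=T^{\rho,\theta}_i(z)$, $z^\rho_i(\theta)=z_i(T^{\rho,\theta})$, such that $(z,\theta)\mapsto T^\rho_i(z,\theta)$ is continuously differentiable for all $i$, for each $\theta$ only finitely many $i_0$ are discontinuity points of $i\mapsto\partial_\theta T^\rho_i(z,\theta)$ for some $z$, and $R(T^{\rho,\theta})=R(T^{\rho,0})$ for all $\theta$; $P$ is the set of such paths. A binary relation $\precsim$ (asymmetric part $\prec$, symmetric part $\sim$) rationalizes $g$ if for all $\rho\in P$: if $\int g_i(T^{\rho,0})\partial_\theta|_{\theta=0}T^\rho_i(z^\rho_i(0),\theta)\,di<0$ then $\exists\bar\theta\in(0,1]$ with $T^{\rho,0}\prec T^{\rho,\theta}$ for all $\theta\in(0,\bar\theta)$; if it is $>0$ then $\exists\bar\theta\in(0,1]$ with $T^{\rho,0}\succ T^{\rho,\theta}$ for all $\theta\in(0,\bar\theta)$; and if $\int g_i(T^{\rho,\theta'})\partial_\theta|_{\theta=\theta'}T^\rho_i(z^\rho_i(\theta'),\theta)\,di=0$ for all $\theta'\in[0,1]$ then $T^{\rho,0}\sim T^{\rho,1}$. A preorder is a reflexive transitive relation. *)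

theory Defs
  imports "HOL-Analysis.Analysis"
begin

datatype charac = E | I | W

definition xch :: "real \<Rightarrow> charac" where
  "xch i = (if i < 1/3 then E else if i \<le> 2/3 then I else W)"

abbreviation Zs :: "real \<Rightarrow> real set" where
  "Zs zbar \<equiv> {0..zbar}"

definition vcost :: "real \<Rightarrow> real" where
  "vcost z = z^2 / 2"

text \<open>A tax policy is represented as T :: real => charac => real, T z k being the tax
  at income z for characteristic k; only the values on Z matter, and we normalise
  them to 0 outside Z.  T_i(z) = T z (xch i).\<close>

type_synonym policy = "real \<Rightarrow> charac \<Rightarrow> real"

definition dZ :: "real \<Rightarrow> (real \<Rightarrow> real) \<Rightarrow> real \<Rightarrow> real" where
  "dZ zbar f z = (SOME d. (f has_real_derivative d) (at z within Zs zbar))"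

definition C2_on :: "real set \<Rightarrow> (real \<Rightarrow> real) \<Rightarrow> bool" where
  "C2_on S f \<longleftrightarrow> (\<exists>f' f''. (\<forall>z\<in>S. (f has_real_derivative f' z) (at z within S))
      \<and> (\<forall>z\<in>S. (f' has_real_derivative f'' z) (at z within S))
      \<and> continuous_on S f'')"

definition is_policy :: "real \<Rightarrow> policy \<Rightarrow> bool" where
  "is_policy zbar T \<longleftrightarrow> (\<forall>k. C2_on (Zs zbar) (\<lambda>z. T z k) \<and> (\<forall>z. z \<notin> Zs zbar \<longrightarrow> T z k = 0))"

definition pnorm :: "real \<Rightarrow> policy \<Rightarrow> real" where
  "pnorm zbar T = Sup {\<bar>T z k\<bar> + \<bar>dZ zbar (\<lambda>y. T y k) z\<bar> + \<bar>dZ zbar (dZ zbar (\<lambda>y. T y k)) z\<bar>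
                       | z k. z \<in> Zs zbar}"

definition pdist :: "real \<Rightarrow> policy \<Rightarrow> policy \<Rightarrow> real" where
  "pdist zbar T T' = pnorm zbar (\<lambda>z k. T z k - T' z k)"

definition open_policies :: "real \<Rightarrow> policy set \<Rightarrow> bool" where
  "open_policies zbar A \<longleftrightarrow> A \<subseteq> {T. is_policy zbar T} \<and>
     (\<forall>T\<in>A. \<exists>\<epsilon>>0. \<forall>T'. is_policy zbar T' \<and> pdist zbar T' T < \<epsilon> \<longrightarrow> T' \<in> A)"

definition strictly_convex_on :: "real set \<Rightarrow> (real \<Rightarrow> real) \<Rightarrow> bool" where
  "strictly_convex_on S f \<longleftrightarrow> (\<forall>x\<in>S. \<forall>y\<in>S. \<forall>t::real. x \<noteq> y \<and> 0 < t \<and> t < 1 \<longrightarrow>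
      f (t * x + (1 - t) * y) < t * f x + (1 - t) * f y)"

definition obj :: "policy \<Rightarrow> charac \<Rightarrow> real \<Rightarrow> real" where
  "obj T k z = z - T z k - vcost z"

definition is_opt :: "real \<Rightarrow> policy \<Rightarrow> charac \<Rightarrow> real \<Rightarrow> bool" where
  "is_opt zbar T k z \<longleftrightarrow> z \<in> Zs zbar \<and> (\<forall>z'\<in>Zs zbar. obj T k z' \<le> obj T k z)"

text \<open>Optimal income z_i(T) of agent i (well defined on the admissible set).\<close>
definition zopt :: "real \<Rightarrow> policy \<Rightarrow> real \<Rightarrow> real" where
  "zopt zbar T i = (THE z. is_opt zbar T (xch i) z)"

definition admissible :: "real \<Rightarrow> policy set \<Rightarrow> bool" where
  "admissible zbar A \<longleftrightarrow> open_policies zbar A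
     \<and> (\<forall>T. is_policy zbar T \<and> (\<forall>k. strictly_convex_on (Zs zbar) (\<lambda>z. T z k)) \<longrightarrow> T \<in> A)
     \<and> (\<forall>T. is_policy zbar T \<and> (\<forall>k. \<exists>a b. 0 \<le> b \<and> b \<le> 1 \<and> (\<forall>z\<in>Zs zbar. T z k = a + b * z))
            \<longrightarrow> T \<in> A)
     \<and> (\<forall>T\<in>A. \<forall>i\<in>{0..1}. \<exists>!z. is_opt zbar T (xch i) z)"

definition revenue :: "real \<Rightarrow> policy \<Rightarrow> real" where
  "revenue zbar T = integral {0..1} (\<lambda>i. T (zopt zbar T i) (xch i))"

definition gw :: "(real \<Rightarrow> real) \<Rightarrow> real \<Rightarrow> policy \<Rightarrow> real \<Rightarrow> real" where
  "gw g zbar T i = (let z = zopt zbar T i; c = z - T z (xch i) in g (z - c))"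

text \<open>A path rho : [a,b] -> admissible set, represented as P theta = T^{rho,theta}.\<close>
definition is_path :: "real \<Rightarrow> policy set \<Rightarrow> real \<Rightarrow> real \<Rightarrow> (real \<Rightarrow> policy) \<Rightarrow> bool" where
  "is_path zbar A a b P \<longleftrightarrow> a < 0 \<and> 1 < b
     \<and> (\<forall>\<theta>\<in>{a..b}. P \<theta> \<in> A)
     \<and> (\<forall>\<theta>\<in>{a..b}. \<forall>\<epsilon>>0. \<exists>\<delta>>0. \<forall>\<theta>'\<in>{a..b}. \<bar>\<theta>' - \<theta>\<bar> < \<delta> \<longrightarrow> pdist zbar (P \<theta>') (P \<theta>) < \<epsilon>)
     \<and> (\<forall>i\<in>{0..1}. \<exists>fz ft.
          continuous_on (Zs zbar \<times> {a..b}) fz \<and> continuous_on (Zs zbar \<times> {a..b}) ft \<and>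
          (\<forall>p\<in>Zs zbar \<times> {a..b}.
             ((\<lambda>(z, t). P t z (xch i)) has_derivative (\<lambda>(dz, dt). fz p * dz + ft p * dt))
               (at p within Zs zbar \<times> {a..b})))
     \<and> (\<forall>\<theta>\<in>{a..b}. finite {i0 \<in> {0..1}. \<exists>z\<in>Zs zbar.
           \<not> continuous (at i0 within {0..1}) (\<lambda>i. deriv (\<lambda>t. P t z (xch i)) \<theta>)})
     \<and> (\<forall>\<theta>\<in>{a..b}. revenue zbar (P \<theta>) = revenue zbar (P 0))"

definition weff :: "(real \<Rightarrow> real) \<Rightarrow> real \<Rightarrow> (real \<Rightarrow> policy) \<Rightarrow> real \<Rightarrow> real" where
  "weff g zbar P \<theta>' = integral {0..1}
      (\<lambda>i. gw g zbar (P \<theta>') i * deriv (\<lambda>t. P t (zopt zbar (P \<theta>') i) (xch i)) \<theta>')"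

definition sprec :: "(policy \<Rightarrow> policy \<Rightarrow> bool) \<Rightarrow> policy \<Rightarrow> policy \<Rightarrow> bool" where
  "sprec R S T \<longleftrightarrow> R S T \<and> \<not> R T S"

definition ssim :: "(policy \<Rightarrow> policy \<Rightarrow> bool) \<Rightarrow> policy \<Rightarrow> policy \<Rightarrow> bool" where
  "ssim R S T \<longleftrightarrow> R S T \<and> R T S"

definition rationalizes ::
  "real \<Rightarrow> policy set \<Rightarrow> (real \<Rightarrow> real) \<Rightarrow> (policy \<Rightarrow> policy \<Rightarrow> bool) \<Rightarrow> bool" where
  "rationalizes zbar A g R \<longleftrightarrow> (\<forall>a b P. is_path zbar A a b P \<longrightarrow>
      (weff g zbar P 0 < 0 \<longrightarrow>
         (\<exists>\<theta>b\<in>{0<..1}. \<forall>\<theta>\<in>{0<..<\<theta>b}. sprec R (P 0) (P \<theta>)))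
    \<and> (weff g zbar P 0 > 0 \<longrightarrow>
         (\<exists>\<theta>b\<in>{0<..1}. \<forall>\<theta>\<in>{0<..<\<theta>b}. sprec R (P \<theta>) (P 0)))
    \<and> ((\<forall>\<theta>'\<in>{0..1}. weff g zbar P \<theta>' = 0) \<longrightarrow> ssim R (P 0) (P 1)))"

definition is_preorder_on :: "policy set \<Rightarrow> (policy \<Rightarrow> policy \<Rightarrow> bool) \<Rightarrow> bool" where
  "is_preorder_on A R \<longleftrightarrow> (\<forall>T\<in>A. R T T) \<and> (\<forall>S\<in>A. \<forall>T\<in>A. \<forall>U\<in>A. R S T \<and> R T U \<longrightarrow> R S U)"

end

theory Submission
  imports Defs
begin

(* Every agent facing a linear tax with marginal rate b \<in> [0,1] earns z = 1 - b. Give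
   characteristic E the rate cos \<phi>, I the rate sin \<phi> and W the rate 0, and choose the
   intercepts so that E pays v - cos\<^sup>2 \<phi> / 2, I pays -v - sin\<^sup>2 \<phi> / 2 and W pays 0;
   call this policy T(v, \<phi>). Since cos\<^sup>2 + sin\<^sup>2 = 1, all these policies raise the same
   revenue, so both moving v and rotating \<phi> give revenue-neutral paths. Rotating \<phi> leaves
   the tax at each agent's current income unchanged to first order (the change in intercept
   offsets the change in rate), so rationalization forces T(v, \<pi>/6) \<sim> T(v, \<pi>/3).
   Raising v shifts taxes from I to E, which the increasing weights g judge by the sign of
   g(tax of E) - g(tax of I): at \<phi> = \<pi>/6 agent E pays less than I, at \<phi> = \<pi>/3 more.
   Hence T(0, \<pi>/6) \<prec> T(\<delta>, \<pi>/6) \<sim> T(\<delta>, \<pi>/3) \<prec> T(0, \<pi>/3) \<sim> T(0, \<pi>/6) for small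
   \<delta> > 0, and such a cycle contradicts transitivity. *)

lemma integral_xch:
  fixes F :: "charac \<Rightarrow> real"
  shows "integral {0..1} (\<lambda>i. F (xch i)) = (F E + F I + F W) / 3"
proof -
  have "((\<lambda>i. F (xch i)) has_integral F E * (1/3)) {0..1/3}"
    by (rule has_integral_spike_finite[where S="{1/3}" and f="\<lambda>_. F E"])
       (use has_integral_const_real[of "F E" 0 "1/3"] in \<open>simp_all add: xch_def\<close>)
  moreover have "((\<lambda>i. F (xch i)) has_integral F I * (1/3)) {1/3..2/3}"
    by (rule has_integral_spike_finite[where S="{}" and f="\<lambda>_. F I"])
       (use has_integral_const_real[of "F I" "1/3" "2/3"] in \<open>simp_all add: xch_def\<close>)
  moreover have "((\<lambda>i. F (xch i)) has_integral F W * (1/3)) {2/3..1}"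
    by (rule has_integral_spike_finite[where S="{2/3}" and f="\<lambda>_. F W"])
       (use has_integral_const_real[of "F W" "2/3" 1] in \<open>simp_all add: xch_def\<close>)
  ultimately have "((\<lambda>i. F (xch i)) has_integral F E * (1/3) + F I * (1/3) + F W * (1/3)) {0..1}"
    by (intro has_integral_combine) (auto intro: has_integral_combine)
  then show ?thesis
    by (simp add: integral_unique)
qed

lemma isCont_comp_xch:
  assumes "i0 \<noteq> 1/3" "i0 \<noteq> 2/3"
  shows "isCont (\<lambda>i. H (xch i)) i0"
proof -
  have "\<forall>\<^sub>F i in nhds i0. xch i = xch i0"
    unfolding eventually_nhds_metric dist_real_def using assms
    by (intro exI[of _ "min \<bar>i0 - 1/3\<bar> \<bar>i0 - 2/3\<bar>"]) (auto simp: xch_def)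
  then have "\<forall>\<^sub>F i in nhds i0. H (xch i) = H (xch i0)"
    by (rule eventually_mono) simp
  then show ?thesis
    by (simp add: isCont_cong)
qed

lemma finite_discontinuities_comp_xch:
  "finite {i0 \<in> {0..1}. \<exists>z\<in>S. \<not> continuous (at i0 within {0..1}) (\<lambda>i. H z (xch i))}"
proof (rule finite_subset)
  show "{i0 \<in> {0..1}. \<exists>z\<in>S. \<not> continuous (at i0 within {0..1}) (\<lambda>i. H z (xch i))} \<subseteq> {1/3, 2/3}"
    using isCont_comp_xch continuous_at_imp_continuous_at_within by blast
qed simp

lemma has_real_derivative_affine_within:
  assumes "\<And>y. y \<in> S \<Longrightarrow> f y = c + d * y" "z \<in> S"
  shows "(f has_real_derivative d) (at z within S)"
proof (rule has_field_derivative_transform_within[where d=1])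
  show "((\<lambda>y. c + d * y) has_real_derivative d) (at z within S)"
    by (auto intro!: derivative_eq_intros)
qed (use assms in auto)

lemma dZ_affine:
  assumes "zbar > 0" "z \<in> {0..zbar}" "\<And>y. y \<in> {0..zbar} \<Longrightarrow> f y = c + d * y"
  shows "dZ zbar f z = d"
proof -
  have D: "(f has_real_derivative d) (at z within {0..zbar})"
    using has_real_derivative_affine_within assms(2,3) by blast
  have "d' = d" if "(f has_real_derivative d') (at z within {0..zbar})" for d'
    using vector_derivative_unique_within_closed_interval[of 0 zbar z f d' d] assms(1,2) that D
    by (simp add: has_real_derivative_iff_has_vector_derivative)
  then show ?thesis
    unfolding dZ_def using D by blast
qed

lemma dZ_dZ_affine:
  assumes "zbar > 0" "z \<in> {0..zbar}" "\<And>y. y \<in> {0..zbar} \<Longrightarrow> f y = c + d * y"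
  shows "dZ zbar (dZ zbar f) z = 0"
  using dZ_affine[OF assms(1) _ assms(3)] by (intro dZ_affine[OF assms(1,2), of _ d]) simp

lemma pdist_le_affine_difference:
  assumes zbar: "zbar > 0"
    and diff: "\<And>z k. z \<in> {0..zbar} \<Longrightarrow> T z k - T' z k = c k + d k * z"
    and bound: "\<And>k. \<bar>c k\<bar> + (zbar + 1) * \<bar>d k\<bar> \<le> B"
  shows "pdist zbar T T' \<le> B"
  unfolding pdist_def pnorm_def
proof (rule cSup_least)
  show "{\<bar>T z k - T' z k\<bar> + \<bar>dZ zbar (\<lambda>y. T y k - T' y k) z\<bar>
          + \<bar>dZ zbar (dZ zbar (\<lambda>y. T y k - T' y k)) z\<bar> | z k. z \<in> {0..zbar}} \<noteq> {}"
    using zbar by fastforce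
next
  fix x
  assume "x \<in> {\<bar>T z k - T' z k\<bar> + \<bar>dZ zbar (\<lambda>y. T y k - T' y k) z\<bar>
                 + \<bar>dZ zbar (dZ zbar (\<lambda>y. T y k - T' y k)) z\<bar> | z k. z \<in> {0..zbar}}"
  then obtain z k where z: "z \<in> {0..zbar}" and x: "x = \<bar>c k + d k * z\<bar> + \<bar>d k\<bar>"
    using dZ_affine[OF zbar _ diff] dZ_dZ_affine[OF zbar _ diff] diff by auto
  have "\<bar>d k * z\<bar> \<le> zbar * \<bar>d k\<bar>"
    using z by (simp add: abs_mult mult_right_mono mult.commute[of "\<bar>d k\<bar>"])
  then have "x \<le> \<bar>c k\<bar> + (zbar + 1) * \<bar>d k\<bar>"
    unfolding x by (simp add: distrib_right abs_triangle_ineq order_trans[OF abs_triangle_ineq])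
  then show "x \<le> B"
    using bound[of k] by linarith
qed

(* The marginal rate for characteristic k is \<beta> k, and the intercept is chosen so that
   the tax due at the optimal income 1 - \<beta> k is \<tau> k. *)
definition linear_policy :: "real \<Rightarrow> (charac \<Rightarrow> real) \<Rightarrow> (charac \<Rightarrow> real) \<Rightarrow> policy" where
  "linear_policy zbar \<tau> \<beta> = (\<lambda>z k. if z \<in> {0..zbar} then \<tau> k + \<beta> k * (z - (1 - \<beta> k)) else 0)"

lemma linear_policy_affine:
  "z \<in> {0..zbar} \<Longrightarrow> linear_policy zbar \<tau> \<beta> z k = (\<tau> k - \<beta> k * (1 - \<beta> k)) + \<beta> k * z"
  by (simp add: linear_policy_def algebra_simps)

lemma is_policy_linear_policy: "is_policy zbar (linear_policy zbar \<tau> \<beta>)"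
  unfolding is_policy_def C2_on_def
proof (intro allI conjI impI exI ballI)
  fix k z
  assume "z \<in> {0..zbar}"
  then show "((\<lambda>z. linear_policy zbar \<tau> \<beta> z k) has_real_derivative \<beta> k) (at z within {0..zbar})"
    and "((\<lambda>_. \<beta> k) has_real_derivative 0) (at z within {0..zbar})"
    by (auto intro!: has_real_derivative_affine_within linear_policy_affine)
qed (auto simp: linear_policy_def)

lemma linear_policy_in_admissible:
  assumes "admissible zbar A" "\<And>k. \<beta> k \<in> {0..1}"
  shows "linear_policy zbar \<tau> \<beta> \<in> A"
proof -
  have "\<exists>a b. 0 \<le> b \<and> b \<le> 1 \<and> (\<forall>z\<in>{0..zbar}. linear_policy zbar \<tau> \<beta> z k = a + b * z)" for k
    using assms(2)[of k] linear_policy_affine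
    by (intro exI[of _ "\<tau> k - \<beta> k * (1 - \<beta> k)"] exI[of _ "\<beta> k"]) auto
  then show ?thesis
    using assms(1) is_policy_linear_policy unfolding admissible_def by blast
qed

lemma is_opt_linear_policy_iff:
  assumes "1 \<le> zbar" "\<beta> k \<in> {0..1}"
  shows "is_opt zbar (linear_policy zbar \<tau> \<beta>) k z \<longleftrightarrow> z = 1 - \<beta> k"
proof -
  let ?obj = "obj (linear_policy zbar \<tau> \<beta>) k"
  have opt_in: "1 - \<beta> k \<in> {0..zbar}"
    using assms by auto
  have obj_eq: "?obj y = ?obj (1 - \<beta> k) - (y - (1 - \<beta> k))\<^sup>2 / 2" if "y \<in> {0..zbar}" for y
    using that opt_in
    by (simp add: obj_def vcost_def linear_policy_def power2_eq_square field_simps)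
  show ?thesis
  proof
    assume "is_opt zbar (linear_policy zbar \<tau> \<beta>) k z"
    then have "z \<in> {0..zbar}" "?obj (1 - \<beta> k) \<le> ?obj z"
      using opt_in unfolding is_opt_def by auto
    then show "z = 1 - \<beta> k"
      using obj_eq[of z] by simp
  next
    assume "z = 1 - \<beta> k"
    moreover have "?obj y \<le> ?obj (1 - \<beta> k)" if "y \<in> {0..zbar}" for y
      using obj_eq[OF that] by (simp add: add_increasing)
    ultimately show "is_opt zbar (linear_policy zbar \<tau> \<beta>) k z"
      unfolding is_opt_def using opt_in by blast
  qed
qed

lemma zopt_linear_policy:
  assumes "1 \<le> zbar" "\<And>k. \<beta> k \<in> {0..1}"
  shows "zopt zbar (linear_policy zbar \<tau> \<beta>) i = 1 - \<beta> (xch i)"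
  unfolding zopt_def is_opt_linear_policy_iff[OF assms(1,2)] by simp

lemma linear_policy_at_zopt:
  assumes "1 \<le> zbar" "\<And>k. \<beta> k \<in> {0..1}"
  shows "linear_policy zbar \<tau> \<beta> (zopt zbar (linear_policy zbar \<tau> \<beta>) i) (xch i) = \<tau> (xch i)"
  unfolding zopt_linear_policy[OF assms]
  using assms(1) assms(2)[of "xch i"] by (simp add: linear_policy_def)

lemma revenue_linear_policy:
  assumes "1 \<le> zbar" "\<And>k. \<beta> k \<in> {0..1}"
  shows "revenue zbar (linear_policy zbar \<tau> \<beta>) = (\<tau> E + \<tau> I + \<tau> W) / 3"
  unfolding revenue_def linear_policy_at_zopt[OF assms] by (rule integral_xch)

lemma gw_linear_policy:
  assumes "1 \<le> zbar" "\<And>k. \<beta> k \<in> {0..1}"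
  shows "gw g zbar (linear_policy zbar \<tau> \<beta>) i = g (\<tau> (xch i))"
  using linear_policy_at_zopt[OF assms] by (simp add: gw_def Let_def)

lemma linear_policy_path_pdist_continuous:
  fixes \<tau> \<beta> :: "real \<Rightarrow> charac \<Rightarrow> real"
  assumes zbar: "0 < zbar"
    and \<tau>: "\<And>k. isCont (\<lambda>t. \<tau> t k) \<theta>" and \<beta>: "\<And>k. isCont (\<lambda>t. \<beta> t k) \<theta>"
    and "\<epsilon> > 0"
  shows "\<exists>\<delta>>0. \<forall>\<theta>'. \<bar>\<theta>' - \<theta>\<bar> < \<delta> \<longrightarrow>
           pdist zbar (linear_policy zbar (\<tau> \<theta>') (\<beta> \<theta>')) (linear_policy zbar (\<tau> \<theta>) (\<beta> \<theta>)) < \<epsilon>"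
proof -
  define c where "c t k = (\<tau> t k - \<beta> t k * (1 - \<beta> t k)) - (\<tau> \<theta> k - \<beta> \<theta> k * (1 - \<beta> \<theta> k))" for t k
  define d where "d t k = \<beta> t k - \<beta> \<theta> k" for t k
  define h where "h t = (\<Sum>k\<in>{E, I, W}. \<bar>c t k\<bar> + (zbar + 1) * \<bar>d t k\<bar>)" for t
  have "isCont h \<theta>"
    unfolding h_def c_def d_def by (intro continuous_intros \<tau> \<beta>)
  moreover have "h \<theta> = 0"
    by (simp add: h_def c_def d_def)
  ultimately obtain \<delta> where \<delta>: "\<delta> > 0" "\<And>t. dist t \<theta> < \<delta> \<Longrightarrow> dist (h t) 0 < \<epsilon>"
    using \<open>\<epsilon> > 0\<close> unfolding continuous_at_eps_delta by metis
  have pdist_le: "pdist zbar (linear_policy zbar (\<tau> t) (\<beta> t)) (linear_policy zbar (\<tau> \<theta>) (\<beta> \<theta>)) \<le> h t" for t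
  proof (rule pdist_le_affine_difference[OF zbar])
    show "linear_policy zbar (\<tau> t) (\<beta> t) z k - linear_policy zbar (\<tau> \<theta>) (\<beta> \<theta>) z k = c t k + d t k * z"
      if "z \<in> {0..zbar}" for z k
      using that by (simp add: linear_policy_affine c_def d_def algebra_simps)
    show "\<bar>c t k\<bar> + (zbar + 1) * \<bar>d t k\<bar> \<le> h t" for k
      using zbar by (cases k) (simp_all add: h_def add_increasing add_increasing2)
  qed
  show ?thesis
  proof (intro exI[of _ \<delta>] conjI allI impI \<delta>(1))
    fix \<theta>'
    assume "\<bar>\<theta>' - \<theta>\<bar> < \<delta>"
    then have "h \<theta>' < \<epsilon>"
      using \<delta>(2)[of \<theta>'] by (simp add: dist_real_def)
    then show "pdist zbar (linear_policy zbar (\<tau> \<theta>') (\<beta> \<theta>')) (linear_policy zbar (\<tau> \<theta>) (\<beta> \<theta>)) < \<epsilon>"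
      using pdist_le[of \<theta>'] by linarith
  qed
qed

lemma has_derivative_linear_in_fst:
  fixes \<alpha> \<beta> :: "real \<Rightarrow> real"
  assumes "(\<alpha> has_real_derivative \<alpha>') (at (snd p))" "(\<beta> has_real_derivative \<beta>') (at (snd p))"
  shows "((\<lambda>(z, t). \<alpha> t + \<beta> t * z) has_derivative
           (\<lambda>(dz, dt). \<beta> (snd p) * dz + (\<alpha>' + \<beta>' * fst p) * dt)) (at p within S)"
proof -
  have snd: "(snd has_derivative snd) (at p within S)" and fst: "(fst has_derivative fst) (at p within S)"
    by (simp_all add: bounded_linear_imp_has_derivative bounded_linear_snd bounded_linear_fst)
  have "((\<lambda>q. \<alpha> (snd q) + \<beta> (snd q) * fst q) has_derivative
          (\<lambda>h. \<alpha>' * snd h + (\<beta> (snd p) * fst h + \<beta>' * snd h * fst p))) (at p within S)"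
    using assms unfolding has_field_derivative_def
    by (intro has_derivative_add has_derivative_mult fst has_derivative_compose[OF snd])
  then show ?thesis
    unfolding case_prod_beta' by (rule has_derivative_eq_rhs) (simp add: fun_eq_iff algebra_simps)
qed

lemma has_real_derivative_linear_policy_path:
  assumes "z \<in> {0..zbar}"
    and "((\<lambda>t. \<tau> t k) has_real_derivative \<tau>') (at \<theta>)" "((\<lambda>t. \<beta> t k) has_real_derivative \<beta>') (at \<theta>)"
  shows "((\<lambda>t. linear_policy zbar (\<tau> t) (\<beta> t) z k) has_real_derivative
           \<tau>' + \<beta>' * (z - 1 + 2 * \<beta> \<theta> k)) (at \<theta>)"
proof -
  have "((\<lambda>t. \<tau> t k + \<beta> t k * (z - (1 - \<beta> t k))) has_real_derivative
          \<tau>' + (\<beta>' * (z - (1 - \<beta> \<theta> k)) + \<beta> \<theta> k * \<beta>')) (at \<theta>)"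
    using assms(2,3) by (auto intro!: derivative_eq_intros)
  then show ?thesis
    using assms(1) by (simp add: linear_policy_def algebra_simps)
qed

(* \<tau>' k + \<beta> \<theta> k * \<beta>' k is the t-derivative of the tax at the fixed income 1 - \<beta> \<theta> k. *)
lemma weff_linear_policy_path:
  assumes zbar: "1 \<le> zbar" and rates: "\<And>k. \<beta> \<theta> k \<in> {0..1}"
    and \<tau>: "\<And>k. ((\<lambda>t. \<tau> t k) has_real_derivative \<tau>' k) (at \<theta>)"
    and \<beta>: "\<And>k. ((\<lambda>t. \<beta> t k) has_real_derivative \<beta>' k) (at \<theta>)"
  shows "weff g zbar (\<lambda>t. linear_policy zbar (\<tau> t) (\<beta> t)) \<theta>
           = integral {0..1} (\<lambda>i. g (\<tau> \<theta> (xch i)) * (\<tau>' (xch i) + \<beta> \<theta> (xch i) * \<beta>' (xch i)))"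
proof -
  have "deriv (\<lambda>t. linear_policy zbar (\<tau> t) (\<beta> t) (1 - \<beta> \<theta> k) k) \<theta> = \<tau>' k + \<beta> \<theta> k * \<beta>' k" for k
    using rates[of k] zbar
    by (auto intro!: DERIV_imp_deriv has_real_derivative_linear_policy_path[OF _ \<tau> \<beta>, THEN DERIV_cong])
  then show ?thesis
    unfolding weff_def gw_linear_policy[OF zbar rates] zopt_linear_policy[OF zbar rates] by simp
qed

lemma linear_policy_path_C1:
  fixes \<tau> \<beta> :: "real \<Rightarrow> charac \<Rightarrow> real" and zbar :: real and J :: "real set"
  assumes \<tau>: "\<And>t. ((\<lambda>t. \<tau> t k) has_real_derivative \<tau>' t) (at t)" "continuous_on UNIV \<tau>'"
    and \<beta>: "\<And>t. ((\<lambda>t. \<beta> t k) has_real_derivative \<beta>' t) (at t)" "continuous_on UNIV \<beta>'"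
  defines "S \<equiv> {0..zbar} \<times> J"
  shows "\<exists>fz ft. continuous_on S fz \<and> continuous_on S ft \<and>
           (\<forall>p\<in>S. ((\<lambda>(z, t). linear_policy zbar (\<tau> t) (\<beta> t) z k) has_derivative
                      (\<lambda>(dz, dt). fz p * dz + ft p * dt)) (at p within S))"
proof (intro exI conjI ballI)
  have cont: "continuous_on S (\<lambda>p. f (snd p))" if "continuous_on UNIV f" for f :: "real \<Rightarrow> real"
    by (rule continuous_on_compose2[OF that continuous_on_snd]) auto
  have \<beta>_cont: "continuous_on UNIV (\<lambda>t. \<beta> t k)"
    by (intro continuous_at_imp_continuous_on ballI DERIV_isCont[OF \<beta>(1)])
  show "continuous_on S (\<lambda>p. \<beta> (snd p) k)"
    by (rule cont[OF \<beta>_cont])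
  show "continuous_on S (\<lambda>p. \<tau>' (snd p) + \<beta>' (snd p) * (fst p - 1 + 2 * \<beta> (snd p) k))"
    by (intro continuous_intros cont \<tau>(2) \<beta>(2) \<beta>_cont)
  fix p
  assume p: "p \<in> S"
  have "((\<lambda>t. \<tau> t k - \<beta> t k * (1 - \<beta> t k)) has_real_derivative
          \<tau>' (snd p) - (\<beta>' (snd p) * (1 - \<beta> (snd p) k) + (0 - \<beta>' (snd p)) * \<beta> (snd p) k)) (at (snd p))"
    by (intro DERIV_diff DERIV_mult DERIV_const \<tau>(1) \<beta>(1))
  from has_derivative_linear_in_fst[OF this \<beta>(1), where S = S]
  have "((\<lambda>(z, t). (\<tau> t k - \<beta> t k * (1 - \<beta> t k)) + \<beta> t k * z) has_derivative
         (\<lambda>(dz, dt). \<beta> (snd p) k * dz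
            + (\<tau>' (snd p) + \<beta>' (snd p) * (fst p - 1 + 2 * \<beta> (snd p) k)) * dt)) (at p within S)"
    by (rule has_derivative_eq_rhs) (simp add: fun_eq_iff algebra_simps)
  then show "((\<lambda>(z, t). linear_policy zbar (\<tau> t) (\<beta> t) z k) has_derivative
      (\<lambda>(dz, dt). \<beta> (snd p) k * dz
         + (\<tau>' (snd p) + \<beta>' (snd p) * (fst p - 1 + 2 * \<beta> (snd p) k)) * dt)) (at p within S)"
    by (rule has_derivative_transform_within[where d=1]) (use p in \<open>auto simp: S_def linear_policy_affine\<close>)
qed

lemma is_path_linear_policy:
  fixes \<tau> \<beta> :: "real \<Rightarrow> charac \<Rightarrow> real"
  assumes zbar: "1 \<le> zbar" and A: "admissible zbar A" and ab: "a < 0" "1 < b"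
    and \<tau>: "\<And>t k. ((\<lambda>t. \<tau> t k) has_real_derivative \<tau>' t k) (at t)" "\<And>k. continuous_on UNIV (\<lambda>t. \<tau>' t k)"
    and \<beta>: "\<And>t k. ((\<lambda>t. \<beta> t k) has_real_derivative \<beta>' t k) (at t)" "\<And>k. continuous_on UNIV (\<lambda>t. \<beta>' t k)"
    and rates: "\<And>t k. t \<in> {a..b} \<Longrightarrow> \<beta> t k \<in> {0..1}"
    and revenue: "\<And>t. t \<in> {a..b} \<Longrightarrow> \<tau> t E + \<tau> t I + \<tau> t W = \<tau> 0 E + \<tau> 0 I + \<tau> 0 W"
  shows "is_path zbar A a b (\<lambda>t. linear_policy zbar (\<tau> t) (\<beta> t))"
  unfolding is_path_def
proof (intro conjI ballI allI impI ab)
  fix \<theta> :: real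
  assume \<theta>: "\<theta> \<in> {a..b}"
  show "linear_policy zbar (\<tau> \<theta>) (\<beta> \<theta>) \<in> A"
    using linear_policy_in_admissible[OF A rates[OF \<theta>]] .
  show "revenue zbar (linear_policy zbar (\<tau> \<theta>) (\<beta> \<theta>)) = revenue zbar (linear_policy zbar (\<tau> 0) (\<beta> 0))"
    using ab revenue[OF \<theta>]
    by (simp add: revenue_linear_policy[OF zbar rates[OF \<theta>]] revenue_linear_policy[OF zbar rates])
  show "finite {i0 \<in> {0..1}. \<exists>z\<in>{0..zbar}.
          \<not> continuous (at i0 within {0..1}) (\<lambda>i. deriv (\<lambda>t. linear_policy zbar (\<tau> t) (\<beta> t) z (xch i)) \<theta>)}"
    by (rule finite_discontinuities_comp_xch)
  show "\<exists>\<delta>>0. \<forall>\<theta>'\<in>{a..b}. \<bar>\<theta>' - \<theta>\<bar> < \<delta> \<longrightarrow>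
          pdist zbar (linear_policy zbar (\<tau> \<theta>') (\<beta> \<theta>')) (linear_policy zbar (\<tau> \<theta>) (\<beta> \<theta>)) < \<epsilon>"
    if "\<epsilon> > 0" for \<epsilon>
  proof -
    have "\<exists>\<delta>>0. \<forall>\<theta>'. \<bar>\<theta>' - \<theta>\<bar> < \<delta> \<longrightarrow>
            pdist zbar (linear_policy zbar (\<tau> \<theta>') (\<beta> \<theta>')) (linear_policy zbar (\<tau> \<theta>) (\<beta> \<theta>)) < \<epsilon>"
      using zbar that DERIV_isCont[OF \<tau>(1)] DERIV_isCont[OF \<beta>(1)]
      by (intro linear_policy_path_pdist_continuous) auto
    then show ?thesis
      by (meson atLeastAtMost_iff)
  qed
next
  fix i :: real
  show "\<exists>fz ft. continuous_on ({0..zbar} \<times> {a..b}) fz \<and> continuous_on ({0..zbar} \<times> {a..b}) ft \<and>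
          (\<forall>p\<in>{0..zbar} \<times> {a..b}. ((\<lambda>(z, t). linear_policy zbar (\<tau> t) (\<beta> t) z (xch i)) has_derivative
                     (\<lambda>(dz, dt). fz p * dz + ft p * dt)) (at p within {0..zbar} \<times> {a..b}))"
    by (rule linear_policy_path_C1[OF \<tau>(1) \<tau>(2) \<beta>(1) \<beta>(2)])
qed

definition rate :: "charac \<Rightarrow> real \<Rightarrow> real" where
  "rate k \<phi> = (case k of E \<Rightarrow> cos \<phi> | I \<Rightarrow> sin \<phi> | W \<Rightarrow> 0)"

definition rate' :: "charac \<Rightarrow> real \<Rightarrow> real" where
  "rate' k \<phi> = (case k of E \<Rightarrow> - sin \<phi> | I \<Rightarrow> cos \<phi> | W \<Rightarrow> 0)"

definition transfer :: "charac \<Rightarrow> real" where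
  "transfer k = (case k of E \<Rightarrow> 1 | I \<Rightarrow> -1 | W \<Rightarrow> 0)"

definition circle_tax :: "real \<Rightarrow> real \<Rightarrow> charac \<Rightarrow> real" where
  "circle_tax v \<phi> k = transfer k * v - (rate k \<phi>)\<^sup>2 / 2"

definition circle_policy :: "real \<Rightarrow> real \<Rightarrow> real \<Rightarrow> policy" where
  "circle_policy zbar v \<phi> = linear_policy zbar (circle_tax v \<phi>) (\<lambda>k. rate k \<phi>)"

lemma rate_has_derivative [derivative_intros]:
  "(f has_real_derivative f') (at t) \<Longrightarrow>
     ((\<lambda>t. rate k (f t)) has_real_derivative rate' k (f t) * f') (at t)"
  by (cases k) (auto simp: rate_def rate'_def intro!: derivative_eq_intros)

lemma continuous_on_rate' [continuous_intros]:
  fixes f :: "real \<Rightarrow> real"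
  shows "continuous_on S f \<Longrightarrow> continuous_on S (\<lambda>t. rate' k (f t))"
  by (cases k) (auto simp: rate'_def intro!: continuous_intros)

lemma continuous_on_rate [continuous_intros]:
  fixes f :: "real \<Rightarrow> real"
  shows "continuous_on S f \<Longrightarrow> continuous_on S (\<lambda>t. rate k (f t))"
  by (cases k) (auto simp: rate_def intro!: continuous_intros)

lemma rate_in_unit_interval: "\<phi> \<in> {0..pi/2} \<Longrightarrow> rate k \<phi> \<in> {0..1}"
  by (cases k) (auto simp: rate_def sin_ge_zero cos_ge_zero)

lemma circle_tax_sum: "circle_tax v \<phi> E + circle_tax v \<phi> I + circle_tax v \<phi> W = - 1/2"
  using sin_cos_squared_add[of \<phi>] by (simp add: circle_tax_def rate_def transfer_def field_simps)

lemma is_path_circle_policy: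
  assumes "1 \<le> zbar" "admissible zbar A" "\<And>\<theta>. \<theta> \<in> {-1..2} \<Longrightarrow> \<phi>0 + c\<phi> * \<theta> \<in> {0..pi/2}"
  shows "is_path zbar A (-1) 2 (\<lambda>\<theta>. circle_policy zbar (v0 + cv * \<theta>) (\<phi>0 + c\<phi> * \<theta>))"
  unfolding circle_policy_def
proof (rule is_path_linear_policy[OF assms(1,2)])
  show "((\<lambda>t. circle_tax (v0 + cv * t) (\<phi>0 + c\<phi> * t) k) has_real_derivative
          transfer k * cv - rate k (\<phi>0 + c\<phi> * t) * (rate' k (\<phi>0 + c\<phi> * t) * c\<phi>)) (at t)" for t k
    unfolding circle_tax_def by (auto intro!: derivative_eq_intros)
  show "((\<lambda>t. rate k (\<phi>0 + c\<phi> * t)) has_real_derivative rate' k (\<phi>0 + c\<phi> * t) * c\<phi>) (at t)" for t k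
    by (auto intro!: derivative_eq_intros)
  show "rate k (\<phi>0 + c\<phi> * t) \<in> {0..1}" if "t \<in> {-1..2}" for t k
    using rate_in_unit_interval[OF assms(3)[OF that]] .
qed (auto intro!: continuous_intros simp: circle_tax_sum)

lemma weff_circle_policy:
  assumes "1 \<le> zbar" "\<phi>0 + c\<phi> * \<theta> \<in> {0..pi/2}"
  shows "weff g zbar (\<lambda>\<theta>. circle_policy zbar (v0 + cv * \<theta>) (\<phi>0 + c\<phi> * \<theta>)) \<theta>
           = (g (circle_tax (v0 + cv * \<theta>) (\<phi>0 + c\<phi> * \<theta>) E)
              - g (circle_tax (v0 + cv * \<theta>) (\<phi>0 + c\<phi> * \<theta>) I)) * cv / 3"
proof -
  let ?v = "v0 + cv * \<theta>" and ?\<phi> = "\<phi>0 + c\<phi> * \<theta>"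
  have "weff g zbar (\<lambda>\<theta>. circle_policy zbar (v0 + cv * \<theta>) (\<phi>0 + c\<phi> * \<theta>)) \<theta>
      = integral {0..1} (\<lambda>i. g (circle_tax ?v ?\<phi> (xch i))
          * (transfer (xch i) * cv - rate (xch i) ?\<phi> * (rate' (xch i) ?\<phi> * c\<phi>)
             + rate (xch i) ?\<phi> * (rate' (xch i) ?\<phi> * c\<phi>)))"
    unfolding circle_policy_def circle_tax_def
    by (rule weff_linear_policy_path[OF assms(1)])
       (auto intro!: derivative_eq_intros rate_in_unit_interval[OF assms(2)] simp del: atLeastAtMost_iff)
  also have "\<dots> = integral {0..1} (\<lambda>i. g (circle_tax ?v ?\<phi> (xch i)) * (transfer (xch i) * cv))"
    by simp
  also have "\<dots> = (g (circle_tax ?v ?\<phi> E) - g (circle_tax ?v ?\<phi> I)) * cv / 3"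
    using integral_xch[of "\<lambda>k. g (circle_tax ?v ?\<phi> k) * (transfer k * cv)"]
    by (simp add: transfer_def algebra_simps)
  finally show ?thesis .
qed

lemma rationalizes_negative_weff:
  assumes "rationalizes zbar A g R" "is_path zbar A a b P" "weff g zbar P 0 < 0"
  shows "\<forall>\<^sub>F \<theta> in at_right 0. sprec R (P 0) (P \<theta>)"
  using assms unfolding rationalizes_def eventually_at_right_field by fastforce

lemma rationalizes_positive_weff:
  assumes "rationalizes zbar A g R" "is_path zbar A a b P" "weff g zbar P 0 > 0"
  shows "\<forall>\<^sub>F \<theta> in at_right 0. sprec R (P \<theta>) (P 0)"
  using assms unfolding rationalizes_def eventually_at_right_field by fastforce

lemma rationalizes_zero_weff:
  assumes "rationalizes zbar A g R" "is_path zbar A a b P" "\<And>\<theta>. \<theta> \<in> {0..1} \<Longrightarrow> weff g zbar P \<theta> = 0"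
  shows "ssim R (P 0) (P 1)"
  using assms unfolding rationalizes_def by blast

lemma circle_policy_in_admissible:
  "admissible zbar A \<Longrightarrow> \<phi> \<in> {0..pi/2} \<Longrightarrow> circle_policy zbar v \<phi> \<in> A"
  unfolding circle_policy_def by (intro linear_policy_in_admissible rate_in_unit_interval)

lemma is_path_transfer:
  assumes "1 \<le> zbar" "admissible zbar A" "\<phi> \<in> {0..pi/2}"
  shows "is_path zbar A (-1) 2 (\<lambda>v. circle_policy zbar v \<phi>)"
  using is_path_circle_policy[OF assms(1,2), of \<phi> 0 0 1] assms(3) by simp

lemma weff_transfer:
  assumes "1 \<le> zbar" "\<phi> \<in> {0..pi/2}"
  shows "weff g zbar (\<lambda>v. circle_policy zbar v \<phi>) 0 = (g (- (cos \<phi>)\<^sup>2 / 2) - g (- (sin \<phi>)\<^sup>2 / 2)) / 3"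
  using weff_circle_policy[OF assms(1), of \<phi> 0 0 g 0 1] assms(2)
  by (simp add: circle_tax_def rate_def transfer_def)

lemma rationalizes_rotation_indifference:
  assumes zbar: "1 \<le> zbar" and A: "admissible zbar A" and R: "rationalizes zbar A g R"
  shows "ssim R (circle_policy zbar v (pi/6)) (circle_policy zbar v (pi/3))"
proof -
  have "pi/6 + pi/6 * \<theta> \<in> {0..pi/2}" if "\<theta> \<in> {-1..2}" for \<theta>
  proof -
    have "pi/6 * (-1) \<le> pi/6 * \<theta>" "pi/6 * \<theta> \<le> pi/6 * 2"
      using that by (intro mult_left_mono; simp)+
    then show ?thesis
      unfolding atLeastAtMost_iff by linarith
  qed
  then have "is_path zbar A (-1) 2 (\<lambda>\<theta>. circle_policy zbar (v + 0 * \<theta>) (pi/6 + pi/6 * \<theta>))"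
    by (rule is_path_circle_policy[OF zbar A])
  moreover have "weff g zbar (\<lambda>\<theta>. circle_policy zbar (v + 0 * \<theta>) (pi/6 + pi/6 * \<theta>)) \<theta> = 0"
    if "\<theta> \<in> {0..1}" for \<theta>
    using that by (subst weff_circle_policy[OF zbar]) (auto simp: field_simps)
  ultimately show ?thesis
    using rationalizes_zero_weff[OF R] by fastforce
qed

lemma rationalizing_relation_has_cycle:
  assumes zbar: "1 \<le> zbar" and A: "admissible zbar A" and g: "strict_mono g"
    and R: "rationalizes zbar A g R"
  shows "\<exists>T0\<in>A. \<exists>T1\<in>A. \<exists>T2\<in>A. \<exists>T3\<in>A.
           sprec R T0 T1 \<and> ssim R T1 T2 \<and> sprec R T2 T3 \<and> ssim R T3 T0"
proof -
  let ?T = "circle_policy zbar"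
  have "sqrt 3 > 1"
    by (simp add: real_less_rsqrt)
  then have "weff g zbar (\<lambda>v. ?T v (pi/6)) 0 < 0" "weff g zbar (\<lambda>v. ?T v (pi/3)) 0 > 0"
    using g by (simp_all add: weff_transfer[OF zbar] cos_30 sin_30 cos_60 sin_60 strict_mono_less power_divide)
  then have "\<forall>\<^sub>F \<delta> in at_right 0. sprec R (?T 0 (pi/6)) (?T \<delta> (pi/6)) \<and> sprec R (?T \<delta> (pi/3)) (?T 0 (pi/3))"
    using rationalizes_negative_weff[OF R is_path_transfer[OF zbar A]]
          rationalizes_positive_weff[OF R is_path_transfer[OF zbar A]]
    by (intro eventually_conj) auto
  then obtain \<delta> where "sprec R (?T 0 (pi/6)) (?T \<delta> (pi/6))" "sprec R (?T \<delta> (pi/3)) (?T 0 (pi/3))"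
    using eventually_happens' trivial_limit_at_right_real by blast
  moreover have "ssim R (?T \<delta> (pi/6)) (?T \<delta> (pi/3))" "ssim R (?T 0 (pi/3)) (?T 0 (pi/6))"
    using rationalizes_rotation_indifference[OF zbar A R] unfolding ssim_def by blast+
  moreover have "?T v (pi/6) \<in> A" "?T v (pi/3) \<in> A" for v
    by (auto intro!: circle_policy_in_admissible[OF A])
  ultimately show ?thesis
    by blast
qed

lemma preorder_has_no_strict_cycle:
  assumes "is_preorder_on A R" "T0 \<in> A" "T1 \<in> A" "T2 \<in> A" "T3 \<in> A"
    and "sprec R T0 T1" "ssim R T1 T2" "sprec R T2 T3" "ssim R T3 T0"
  shows False
proof -
  have "R T1 T3"
    using assms unfolding is_preorder_on_def sprec_def ssim_def by blast
  then have "R T1 T0"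
    using assms unfolding is_preorder_on_def ssim_def by blast
  then show False
    using assms(6) unfolding sprec_def by blast
qed

theorem proposition6:
  fixes zbar :: real and A :: "policy set" and g :: "real \<Rightarrow> real" and u :: "real \<Rightarrow> real"
  assumes zbar: "zbar > 1"
    and u_mono: "strict_mono u" and u_concave: "concave_on UNIV u"
    and u_C2: "\<exists>u' u''. (\<forall>y. (u has_real_derivative u' y) (at y))
                  \<and> (\<forall>y. (u' has_real_derivative u'' y) (at y)) \<and> continuous_on UNIV u''"
    and A: "admissible zbar A"
    and g_pos: "\<forall>t. g t > 0"
    and g_deriv: "\<forall>t. \<exists>d>0. (g has_real_derivative d) (at t)"
  shows "\<not> (\<exists>R. is_preorder_on A R \<and> rationalizes zbar A g R) \<and>
         (\<forall>R. rationalizes zbar A g R \<longrightarrow>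
           (\<exists>T0\<in>A. \<exists>T1\<in>A. \<exists>T2\<in>A. \<exists>T3\<in>A.
              sprec R T0 T1 \<and> ssim R T1 T2 \<and> sprec R T2 T3 \<and> ssim R T3 T0))"
proof -
  (* Neither the utility u nor the positivity of g enters the notion of rationalization. *)
  have "strict_mono g"
    using g_deriv by (intro strict_monoI) (metis DERIV_pos_imp_increasing)
  then have cycle: "\<exists>T0\<in>A. \<exists>T1\<in>A. \<exists>T2\<in>A. \<exists>T3\<in>A.
                      sprec R T0 T1 \<and> ssim R T1 T2 \<and> sprec R T2 T3 \<and> ssim R T3 T0"
    if "rationalizes zbar A g R" for R
    using rationalizing_relation_has_cycle[OF _ A _ that] zbar by simp
  then show ?thesis
    using preorder_has_no_strict_cycle by metis
qed

end
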